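(* Let $G=(V,E,w)$ be an undirected graph with positive real edge weights, $s\in V$, $f\ge1$ an integer, and let $T$, $w'$, $H$ be as in the context. Let $F\subseteq E$ with $|F|\le f$, and let $t\in V$ be a vertex reachable from $s$ in $G-F$. Let $M$ be a minimum spanning forest of $H-F$ with respect to $w'$, let $\pi'$ be the unique path from $s$ to $t$ in $M$, and let $N'$ be the set of new edges of $\pi'$. Then $$d_{H-F}(t)\le w(\pi')\le \sum_{e\in N'} w'(e)+d_G(t).$$
   Context: For a subgraph $X$ of $G$, $d_X(u,u')$ is the distance between $u,u'$ in $X$ with respect to $w$, and $d_X(u)=d_X(s,u)$; $w(\pi)$ is the total $w$-weight of a path $\pi$. $T$ is a shortest-path tree of $G$ rooted at $s$. Define $w'(u,v)=0$ if $(u,v)\in E(T)$ and $w'(u,v)=d_T(u)+w(u,v)+d_T(v)$ otherwise; $G'=(V,E,w')$. Set $G_0=G'$; for $i=0,\dots,f$ let $M_i$ be the edge set of a minimum spanning forest of $G_i$ with respect to $w'$ and $G_{i+1}=G_i$ minus the edges of $M_i$. $H$ is the spanning subgraph of $G$ with edge set $\bigcup_{i=0}^f M_i$. $X-F$ denotes $X$ with the edges of $F$ removed. An edge is called new (with respect to $F$) if its endpoints lie in different connected components of the forest $T-F$. *)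

theory Defs
  imports Complex_Main "HOL-Library.Extended_Real"
begin

definition edges_ok :: "'v set \<Rightarrow> 'v set set \<Rightarrow> bool" where
  "edges_ok V E \<longleftrightarrow> (\<forall>e\<in>E. \<exists>u v. u \<noteq> v \<and> u \<in> V \<and> v \<in> V \<and> e = {u, v})"

fun path_edges :: "'v list \<Rightarrow> 'v set list" where
  "path_edges (x # y # xs) = {x, y} # path_edges (y # xs)"
| "path_edges _ = []"

definition is_walk :: "'v set \<Rightarrow> 'v set set \<Rightarrow> 'v list \<Rightarrow> bool" where
  "is_walk V X p \<longleftrightarrow> p \<noteq> [] \<and> set p \<subseteq> V \<and> set (path_edges p) \<subseteq> X"

definition is_path :: "'v set \<Rightarrow> 'v set set \<Rightarrow> 'v \<Rightarrow> 'v \<Rightarrow> 'v list \<Rightarrow> bool" where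
  "is_path V X u v p \<longleftrightarrow> is_walk V X p \<and> distinct p \<and> hd p = u \<and> last p = v"

definition connected_in :: "'v set \<Rightarrow> 'v set set \<Rightarrow> 'v \<Rightarrow> 'v \<Rightarrow> bool" where
  "connected_in V X u v \<longleftrightarrow> (\<exists>p. is_path V X u v p)"

definition path_weight :: "('v set \<Rightarrow> real) \<Rightarrow> 'v list \<Rightarrow> real" where
  "path_weight w p = sum_list (map w (path_edges p))"

text \<open>d_X(u,v): distance in the subgraph (V,X) w.r.t. w (\<infinity> if unreachable).\<close>
definition dist :: "'v set \<Rightarrow> 'v set set \<Rightarrow> ('v set \<Rightarrow> real) \<Rightarrow> 'v \<Rightarrow> 'v \<Rightarrow> ereal" where
  "dist V X w u v = (INF p \<in> {p. is_path V X u v p}. ereal (path_weight w p))"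

definition is_cycle :: "'v set \<Rightarrow> 'v set set \<Rightarrow> 'v list \<Rightarrow> bool" where
  "is_cycle V X c \<longleftrightarrow> length c \<ge> 3 \<and> distinct c \<and> is_walk V X c \<and> {last c, hd c} \<in> X"

definition acyclic_edges :: "'v set \<Rightarrow> 'v set set \<Rightarrow> bool" where
  "acyclic_edges V X \<longleftrightarrow> \<not> (\<exists>c. is_cycle V X c)"

definition spanning_forest :: "'v set \<Rightarrow> 'v set set \<Rightarrow> 'v set set \<Rightarrow> bool" where
  "spanning_forest V X M \<longleftrightarrow> M \<subseteq> X \<and> acyclic_edges V M \<and>
     (\<forall>u\<in>V. \<forall>v\<in>V. connected_in V X u v \<longrightarrow> connected_in V M u v)"

definition min_spanning_forest ::
  "'v set \<Rightarrow> 'v set set \<Rightarrow> ('v set \<Rightarrow> real) \<Rightarrow> 'v set set \<Rightarrow> bool" where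
  "min_spanning_forest V X c M \<longleftrightarrow> spanning_forest V X M \<and>
     (\<forall>M'. spanning_forest V X M' \<longrightarrow> sum c M \<le> sum c M')"

definition sp_tree :: "'v set \<Rightarrow> 'v set set \<Rightarrow> ('v set \<Rightarrow> real) \<Rightarrow> 'v \<Rightarrow> 'v set set \<Rightarrow> bool" where
  "sp_tree V E w s T \<longleftrightarrow> T \<subseteq> E \<and> acyclic_edges V T \<and>
     (\<forall>u\<in>V. \<forall>v\<in>V. connected_in V T u v) \<and>
     (\<forall>v\<in>V. dist V T w s v = dist V E w s v)"

definition w_prime :: "'v set \<Rightarrow> 'v set set \<Rightarrow> ('v set \<Rightarrow> real) \<Rightarrow> 'v \<Rightarrow> 'v set \<Rightarrow> real" where
  "w_prime V T w s e = (if e \<in> T then 0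
      else w e + (\<Sum>u\<in>e. real_of_ereal (dist V T w s u)))"

definition new_edge :: "'v set \<Rightarrow> 'v set set \<Rightarrow> 'v set set \<Rightarrow> 'v set \<Rightarrow> bool" where
  "new_edge V T F e \<longleftrightarrow> (\<exists>u v. e = {u, v} \<and> \<not> connected_in V (T - F) u v)"

end

theory Submission
  imports Defs
begin

text \<open>The levels M_0, ..., M_f are pairwise disjoint forests, and an edge of G - F missing
  from H is spanned by every level; if F cut all f + 1 of these connections it would have more
  than f edges, so H - F connects s and t. Tree edges have w'-cost 0 and all other edges
  positive w'-cost, so minimum spanning forests keep every tree edge they may use: T lies in
  M_0 and T - F in M. Cutting the M-path at its new edges leaves segments without new edges;
  such a segment joins two vertices of one component of T - F, so by uniqueness of forest paths
  it is the tree path between them and weighs at most d_T(a) + d_T(b). A new edge is no tree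
  edge, so its w'-cost pays for its own weight together with the depths of both of its ends.\<close>

lemma path_edges_append_shared:
  "path_edges (xs @ y # ys) = path_edges (xs @ [y]) @ path_edges (y # ys)"
  by (induction xs rule: path_edges.induct) auto

lemma path_edges_append:
  assumes "xs \<noteq> []" "ys \<noteq> []"
  shows "path_edges (xs @ ys) = path_edges xs @ {last xs, hd ys} # path_edges ys"
proof -
  obtain xs' a where xs: "xs = xs' @ [a]" using assms(1) by (cases xs rule: rev_cases) auto
  obtain b ys' where ys: "ys = b # ys'" using assms(2) by (cases ys) auto
  show ?thesis
    using path_edges_append_shared[of xs' a "b # ys'"] by (simp add: xs ys)
qed

lemma path_edges_rev: "path_edges (rev xs) = rev (path_edges xs)"
proof (induction xs rule: path_edges.induct)
  case (1 x y xs)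
  have "path_edges (rev (x # y # xs)) = path_edges (rev (y # xs) @ [x])" by simp
  also have "\<dots> = rev (path_edges (y # xs)) @ [{y, x}]"
    using 1 by (subst path_edges_append) auto
  finally show ?case by (simp add: insert_commute)
qed auto

lemma path_edges_subset: "e \<in> set (path_edges p) \<Longrightarrow> e \<subseteq> set p"
  by (induction p rule: path_edges.induct) auto

lemma distinct_path_edges: "distinct p \<Longrightarrow> distinct (path_edges p)"
  by (induction p rule: path_edges.induct) (auto dest: path_edges_subset)

lemma in_path_edges_split:
  assumes "e \<in> set (path_edges p)"
  obtains p1 p2 where "p = p1 @ p2" "p1 \<noteq> []" "p2 \<noteq> []" "e = {last p1, hd p2}"
proof -
  have "\<exists>p1 p2. p = p1 @ p2 \<and> p1 \<noteq> [] \<and> p2 \<noteq> [] \<and> e = {last p1, hd p2}"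
    using assms
  proof (induction p rule: path_edges.induct)
    case (1 x y xs)
    show ?case
    proof (cases "e = {x, y}")
      case True
      then show ?thesis by (intro exI[of _ "[x]"] exI[of _ "y # xs"]) auto
    next
      case False
      then obtain p1 p2 where "y # xs = p1 @ p2" "p1 \<noteq> []" "p2 \<noteq> []" "e = {last p1, hd p2}"
        using 1 by auto
      then show ?thesis by (intro exI[of _ "x # p1"] exI[of _ p2]) auto
    qed
  qed auto
  then show ?thesis using that by blast
qed

lemma path_weight_append:
  "xs \<noteq> [] \<Longrightarrow> ys \<noteq> [] \<Longrightarrow>
   path_weight w (xs @ ys) = path_weight w xs + w {last xs, hd ys} + path_weight w ys"
  by (simp add: path_weight_def path_edges_append)

lemma path_weight_rev: "path_weight w (rev p) = path_weight w p"
  by (simp add: path_weight_def path_edges_rev rev_map[symmetric] sum_list_rev)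

lemma path_weight_append_tl:
  assumes "p \<noteq> []" "q \<noteq> []" "last p = hd q"
  shows "path_weight w (p @ tl q) = path_weight w p + path_weight w q"
proof -
  obtain b q' where q: "q = b # q'" using assms by (cases q) auto
  show ?thesis
  proof (cases q')
    case Nil
    then show ?thesis by (simp add: q path_weight_def)
  next
    case (Cons c r)
    then show ?thesis using assms path_weight_append[of p q' w]
      by (simp add: q path_weight_def)
  qed
qed

lemma last_append_tl: "q \<noteq> [] \<Longrightarrow> last p = hd q \<Longrightarrow> last (p @ tl q) = last q"
  by (cases q) auto

lemma is_walk_mono: "is_walk V X p \<Longrightarrow> X \<subseteq> Y \<Longrightarrow> is_walk V Y p"
  by (auto simp: is_walk_def)

lemma is_walk_rev: "is_walk V X p \<Longrightarrow> is_walk V X (rev p)"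
  by (auto simp: is_walk_def path_edges_rev)

lemma is_walk_append_tl:
  assumes "is_walk V X p" "is_walk V X q" "last p = hd q"
  shows "is_walk V X (p @ tl q)"
proof -
  obtain b q' where q: "q = b # q'" using assms by (cases q) (auto simp: is_walk_def)
  have "p \<noteq> []" using assms by (auto simp: is_walk_def)
  then show ?thesis
    using assms by (cases q') (auto simp: q is_walk_def path_edges_append)
qed

lemma is_path_mono: "is_path V X u v p \<Longrightarrow> X \<subseteq> Y \<Longrightarrow> is_path V Y u v p"
  by (auto simp: is_path_def intro: is_walk_mono)

lemma is_path_rev: "is_path V X u v p \<Longrightarrow> is_path V X v u (rev p)"
  by (auto simp: is_path_def hd_rev last_rev intro: is_walk_rev)

lemma is_path_loop: "is_path V X u u p \<Longrightarrow> p = [u]"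
  by (cases p) (auto simp: is_path_def is_walk_def split: if_splits)

text \<open>Repeatedly cut out the closed sub-walk between two visits of a vertex; with nonnegative
  weights this never increases the weight.\<close>
lemma walk_shortcut_to_path:
  assumes "is_walk V X p" "\<forall>e\<in>X. 0 \<le> w e"
  obtains q where "is_path V X (hd p) (last p) q" "path_weight w q \<le> path_weight w p"
proof -
  have "\<exists>q. is_path V X (hd p) (last p) q \<and> path_weight w q \<le> path_weight w p"
    using assms(1)
  proof (induction "length p" arbitrary: p rule: less_induct)
    case less
    show ?case
    proof (cases "distinct p")
      case True
      then show ?thesis using less.prems by (auto simp: is_path_def)
    next
      case False
      then obtain xs ys zs y where p: "p = xs @ [y] @ ys @ [y] @ zs"
        using not_distinct_decomp by blast
      let ?p' = "xs @ y # zs"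
      have e1: "path_edges p =
          path_edges (xs @ [y]) @ path_edges (y # ys @ [y]) @ path_edges (y # zs)"
        using path_edges_append_shared[of xs y "ys @ y # zs"]
          path_edges_append_shared[of "y # ys" y zs] p by simp
      have e2: "path_edges ?p' = path_edges (xs @ [y]) @ path_edges (y # zs)"
        using path_edges_append_shared[of xs y zs] by simp
      have walk: "is_walk V X ?p'" using less.prems e1 e2 p by (auto simp: is_walk_def)
      have "0 \<le> sum_list (map w (path_edges (y # ys @ [y])))"
        using less.prems assms(2) e1 by (intro sum_list_nonneg) (auto simp: is_walk_def)
      then have lighter: "path_weight w ?p' \<le> path_weight w p"
        using e1 e2 by (simp add: path_weight_def)
      obtain q where q: "is_path V X (hd ?p') (last ?p') q" "path_weight w q \<le> path_weight w ?p'"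
        using less.hyps[of ?p'] walk p by auto
      have "hd ?p' = hd p" "last ?p' = last p" using p by (cases xs; simp)+
      then show ?thesis using q lighter by auto
    qed
  qed
  then show ?thesis using that by blast
qed

lemma connected_in_walk: "is_walk V X p \<Longrightarrow> connected_in V X (hd p) (last p)"
  using walk_shortcut_to_path[of V X p "\<lambda>_. 0"] by (auto simp: connected_in_def)

lemma connected_in_path: "is_path V X u v p \<Longrightarrow> connected_in V X u v"
  by (auto simp: connected_in_def)

lemma connected_in_refl: "u \<in> V \<Longrightarrow> connected_in V X u u"
  unfolding connected_in_def is_path_def is_walk_def by (intro exI[of _ "[u]"]) auto

lemma connected_in_sym: "connected_in V X u v \<Longrightarrow> connected_in V X v u"
  by (auto simp: connected_in_def dest: is_path_rev)

lemma connected_in_trans: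
  assumes "connected_in V X u v" "connected_in V X v x"
  shows "connected_in V X u x"
proof -
  obtain p q where p: "is_path V X u v p" and q: "is_path V X v x q"
    using assms by (auto simp: connected_in_def)
  have "is_walk V X (p @ tl q)" using p q is_walk_append_tl[of V X p q] by (auto simp: is_path_def)
  moreover have "hd (p @ tl q) = u" "last (p @ tl q) = x" using p q last_append_tl[of q p]
    by (auto simp: is_path_def is_walk_def)
  ultimately show ?thesis using connected_in_walk by fastforce
qed

lemma connected_in_mono: "connected_in V X u v \<Longrightarrow> X \<subseteq> Y \<Longrightarrow> connected_in V Y u v"
  by (auto simp: connected_in_def intro: is_path_mono)

lemma connected_in_vertices: "connected_in V X u v \<Longrightarrow> u \<in> V \<and> v \<in> V"
  by (auto simp: connected_in_def is_path_def is_walk_def)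

lemma connected_in_edge: "{x, y} \<in> X \<Longrightarrow> x \<in> V \<Longrightarrow> y \<in> V \<Longrightarrow> connected_in V X x y"
  unfolding connected_in_def is_path_def is_walk_def
  by (cases "x = y") (auto intro: exI[of _ "[x]"] exI[of _ "[x, y]"])

lemma connected_in_lift:
  assumes "\<And>x y. {x, y} \<in> X \<Longrightarrow> x \<in> V \<Longrightarrow> y \<in> V \<Longrightarrow> connected_in V Y x y"
    and "connected_in V X a b"
  shows "connected_in V Y a b"
proof -
  have "is_walk V X p \<Longrightarrow> connected_in V Y (hd p) (last p)" for p
  proof (induction p rule: path_edges.induct)
    case (1 x y xs)
    then have "connected_in V Y x y" "connected_in V Y y (last (y # xs))"
      using assms(1) by (auto simp: is_walk_def)
    then show ?case using connected_in_trans by fastforce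
  qed (auto simp: is_walk_def intro: connected_in_refl)
  then show ?thesis using assms(2) by (fastforce simp: connected_in_def is_path_def)
qed

lemma is_path_split_at_edge:
  assumes "is_path V X a b p" "e \<in> set (path_edges p)"
  obtains p1 p2 where "p = p1 @ p2" "e = {last p1, hd p2}" "last p1 \<noteq> hd p2"
    "path_edges p = path_edges p1 @ e # path_edges p2"
    "is_path V (X - {e}) a (last p1) p1" "is_path V (X - {e}) (hd p2) b p2"
proof -
  obtain p1 p2 where split: "p = p1 @ p2" "p1 \<noteq> []" "p2 \<noteq> []" "e = {last p1, hd p2}"
    using in_path_edges_split[OF assms(2)] .
  have edges: "path_edges p = path_edges p1 @ e # path_edges p2"
    using path_edges_append[OF split(2,3)] split(1,4) by simp
  have dist: "distinct p" using assms(1) by (simp add: is_path_def)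
  then have "distinct (path_edges p)" by (rule distinct_path_edges)
  then have "e \<notin> set (path_edges p1)" "e \<notin> set (path_edges p2)" using edges by auto
  moreover have "last p1 \<noteq> hd p2"
    using dist split last_in_set[of p1] hd_in_set[of p2] by (auto simp del: last_in_set)
  ultimately show ?thesis
    using that[OF split(1,4) _ edges] assms(1) split edges by (auto simp: is_path_def is_walk_def)
qed

lemma acyclic_edges_mono: "acyclic_edges V Y \<Longrightarrow> X \<subseteq> Y \<Longrightarrow> acyclic_edges V X"
  by (auto simp: acyclic_edges_def is_cycle_def intro: is_walk_mono)

text \<open>An x-y path avoiding the edge {x, y} has at least 3 vertices, and that edge closes it
  up to a cycle.\<close>
lemma acyclic_no_bypass:
  assumes "acyclic_edges V X" "{x, y} \<in> X" "x \<noteq> y"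
  shows "\<not> connected_in V (X - {{x, y}}) x y"
proof
  assume "connected_in V (X - {{x, y}}) x y"
  then obtain P where P: "is_path V (X - {{x, y}}) x y P" by (auto simp: connected_in_def)
  show False
  proof (cases "3 \<le> length P")
    case True
    then have "is_cycle V X P" unfolding is_cycle_def
      using P assms(2) is_walk_mono[of V "X - {{x, y}}" P X]
      by (auto simp: is_path_def insert_commute)
    then show False using assms(1) by (auto simp: acyclic_edges_def)
  next
    case False
    then have "P = [x, y]" using P assms(3)
      by (cases P rule: path_edges.cases) (auto simp: is_path_def is_walk_def Suc_le_eq)
    then show False using P by (auto simp: is_path_def is_walk_def)
  qed
qed

lemma path_edge_bypass:
  assumes "is_path V X a b p" "e \<in> set (path_edges p)" "connected_in V (X - {e}) a b"
  obtains x y where "e = {x, y}" "x \<noteq> y" "connected_in V (X - {e}) x y"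
proof -
  obtain p1 p2 where split: "e = {last p1, hd p2}" "last p1 \<noteq> hd p2"
    and p1: "is_path V (X - {e}) a (last p1) p1" and p2: "is_path V (X - {e}) (hd p2) b p2"
    using is_path_split_at_edge[OF assms(1,2)] by metis
  have "connected_in V (X - {e}) (last p1) (hd p2)"
    using connected_in_path[OF is_path_rev[OF p1]] assms(3) connected_in_path[OF is_path_rev[OF p2]]
    by (blast intro: connected_in_trans)
  then show ?thesis using that split by blast
qed

lemma path_eq_if_same_edges:
  "distinct p \<Longrightarrow> distinct q \<Longrightarrow> p \<noteq> [] \<Longrightarrow> q \<noteq> [] \<Longrightarrow> hd p = hd q
   \<Longrightarrow> set (path_edges p) = set (path_edges q) \<Longrightarrow> p = q"
proof (induction p arbitrary: q rule: path_edges.induct)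
  case (1 a x p')
  obtain y q' where q: "q = a # y # q'"
    using 1 by (cases q rule: path_edges.cases) auto
  have a_notin: "a \<notin> set (x # p')" "a \<notin> set (y # q')" using 1(2,3) q by auto
  then have first_edge: "{a, x} \<notin> set (path_edges (x # p'))" "{a, y} \<notin> set (path_edges (y # q'))"
    by (auto dest: path_edges_subset)
  have "{a, x} \<notin> set (path_edges (y # q'))"
    using a_notin(2) path_edges_subset by blast
  moreover have "{a, x} \<in> set (path_edges q)" by (subst 1(7)[symmetric]) simp
  ultimately have xy: "x = y" using q by (auto simp: doubleton_eq_iff)
  have "set (path_edges (x # p')) = set (path_edges (y # q'))"
    using 1(7) first_edge xy q by (simp add: insert_ident)
  moreover have "distinct (x # p')" "distinct (y # q')" using 1(2,3) q by simp_all
  ultimately have "x # p' = y # q'" using 1(1)[of "y # q'"] xy by simp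
  then show ?case using q by simp
next
  case ("2_2" v q)
  then show ?case by (cases q rule: path_edges.cases) auto
qed simp

lemma acyclic_path_unique:
  assumes "acyclic_edges V X" "is_path V X a b p" "is_path V X a b q"
  shows "p = q"
proof -
  have "set (path_edges p) \<subseteq> set (path_edges q)"
    if p: "is_path V X a b p" and q: "is_path V X a b q" for p q
  proof
    fix e assume e: "e \<in> set (path_edges p)"
    show "e \<in> set (path_edges q)"
    proof (rule ccontr)
      assume "e \<notin> set (path_edges q)"
      then have "is_path V (X - {e}) a b q" using q by (auto simp: is_path_def is_walk_def)
      then obtain x y where "e = {x, y}" "x \<noteq> y" "connected_in V (X - {e}) x y"
        using path_edge_bypass[OF p e] connected_in_path by metis
      moreover have "e \<in> X" using p e by (auto simp: is_path_def is_walk_def)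
      ultimately show False using acyclic_no_bypass[OF assms(1)] by blast
    qed
  qed
  then have "set (path_edges p) = set (path_edges q)" using assms(2,3) by blast
  then show ?thesis
    using path_eq_if_same_edges assms(2,3) by (auto simp: is_path_def is_walk_def)
qed

lemma cycle_edge_bypass:
  assumes "is_cycle V X c" "e \<in> insert {last c, hd c} (set (path_edges c))"
  obtains x y where "e = {x, y}" "x \<noteq> y" "connected_in V (X - {e}) x y"
proof -
  have c: "is_path V X (hd c) (last c) c" and closing: "{last c, hd c} \<in> X"
    and "distinct c" "3 \<le> length c"
    using assms(1) by (auto simp: is_cycle_def is_path_def)
  then obtain a b c' where c_eq: "c = a # b # c'" "c' \<noteq> []"
    by (cases c rule: path_edges.cases) (auto simp: Suc_le_eq)
  then have ends: "hd c \<noteq> last c" using \<open>distinct c\<close> by auto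
  have "{last c, hd c} \<notin> set (path_edges c)"
    using \<open>distinct c\<close> c_eq path_edges_subset[of "{last c, hd c}" "b # c'"]
    by (auto simp: doubleton_eq_iff)
  show ?thesis
  proof (cases "e = {last c, hd c}")
    case True
    then have "is_path V (X - {e}) (hd c) (last c) c"
      using c \<open>{last c, hd c} \<notin> _\<close> by (auto simp: is_path_def is_walk_def)
    then show ?thesis using that[of "hd c" "last c"] True ends
      by (auto simp: insert_commute dest: connected_in_path)
  next
    case False
    then have "e \<in> set (path_edges c)" using assms(2) by simp
    moreover have "{hd c, last c} \<in> X - {e}" using closing False by (auto simp: insert_commute)
    then have "connected_in V (X - {e}) (hd c) (last c)"
      by (rule connected_in_edge) (use c in \<open>auto simp: is_path_def is_walk_def\<close>)
    ultimately show ?thesis using path_edge_bypass[OF c] that by blast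
  qed
qed

lemma finite_paths: "finite V \<Longrightarrow> finite {p. is_path V X u v p}"
proof -
  assume fin: "finite V"
  have "{p. is_path V X u v p} \<subseteq> {xs. set xs \<subseteq> V \<and> length xs \<le> card V}"
  proof
    fix p assume "p \<in> {p. is_path V X u v p}"
    then have "distinct p" "set p \<subseteq> V" by (auto simp: is_path_def is_walk_def)
    then show "p \<in> {xs. set xs \<subseteq> V \<and> length xs \<le> card V}"
      using card_mono[OF fin] by (auto simp: distinct_card[symmetric])
  qed
  then show ?thesis using finite_lists_length_le[OF fin] finite_subset by blast
qed

lemma dist_attained:
  assumes "finite V" "connected_in V X u v"
  obtains P where "is_path V X u v P" "dist V X w u v = ereal (path_weight w P)"
proof -
  let ?A = "(\<lambda>p. ereal (path_weight w p)) ` {p. is_path V X u v p}"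
  have "finite ?A" using finite_paths[OF assms(1)] by blast
  moreover have "?A \<noteq> {}" using assms(2) by (auto simp: connected_in_def)
  ultimately have "Inf ?A \<in> ?A" using Min_Inf Min_in by metis
  then show ?thesis using that by (auto simp: dist_def)
qed

lemma dist_le_path_weight: "is_path V X u v p \<Longrightarrow> dist V X w u v \<le> ereal (path_weight w p)"
  unfolding dist_def by (rule INF_lower) simp

lemma finite_edges: "finite V \<Longrightarrow> edges_ok V E \<Longrightarrow> finite E"
  by (rule finite_subset[of E "Pow V"]) (auto simp: edges_ok_def)

lemma connected_in_exchange:
  assumes P: "is_path V M u v P" and g: "g \<in> set (path_edges P)" and "{u, v} \<notin> M"
    and "connected_in V M a b"
  shows "connected_in V (insert {u, v} (M - {g})) a b"
proof -
  let ?M' = "insert {u, v} (M - {g})"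
  have "g \<in> M" using P g by (auto simp: is_path_def is_walk_def)
  then have M'_g: "insert g ?M' - {g} = ?M'" using assms(3) by auto
  have "u \<in> V" "v \<in> V" using P by (auto simp: is_path_def is_walk_def)
  then have "connected_in V ?M' u v" by (intro connected_in_edge) auto
  moreover have "is_path V (insert g ?M') u v P" using P by (rule is_path_mono) auto
  ultimately obtain x y where xy: "g = {x, y}" "connected_in V ?M' x y"
    using path_edge_bypass[of V "insert g ?M'" u v P g] g unfolding M'_g by blast
  show ?thesis
  proof (rule connected_in_lift[OF _ assms(4)])
    fix a' b' assume edge: "{a', b'} \<in> M" "a' \<in> V" "b' \<in> V"
    show "connected_in V ?M' a' b'"
    proof (cases "{a', b'} = g")
      case True
      then have "(a' = x \<and> b' = y) \<or> (a' = y \<and> b' = x)" using xy(1) by (simp add: doubleton_eq_iff)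
      then show ?thesis using xy(2) by (auto intro: connected_in_sym)
    next
      case False
      then show ?thesis using edge by (intro connected_in_edge) auto
    qed
  qed
qed

lemma acyclic_edges_exchange:
  assumes acyclic: "acyclic_edges V M" and P: "is_path V M u v P" and g: "g \<in> set (path_edges P)"
  shows "acyclic_edges V (insert {u, v} (M - {g}))"
  unfolding acyclic_edges_def
proof
  let ?M' = "insert {u, v} (M - {g})"
  assume "\<exists>C. is_cycle V ?M' C"
  then obtain C where C: "is_cycle V ?M' C" by blast
  show False
  proof (cases "{u, v} \<in> insert {last C, hd C} (set (path_edges C))")
    case True
    then obtain x y where xy: "{u, v} = {x, y}" "connected_in V (?M' - {{u, v}}) x y"
      by (rule cycle_edge_bypass[OF C])
    have "?M' - {{u, v}} \<subseteq> M - {g}" by blast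
    then have "connected_in V (M - {g}) x y" using xy(2) by (rule connected_in_mono[rotated])
    then have "connected_in V (M - {g}) u v"
      using xy(1) unfolding doubleton_eq_iff by (auto intro: connected_in_sym)
    then obtain Q where Q: "is_path V (M - {g}) u v Q" by (auto simp: connected_in_def)
    then have "is_path V M u v Q" by (rule is_path_mono) blast
    then have "Q = P" using acyclic_path_unique[OF acyclic _ P] by blast
    then show False using Q g by (auto simp: is_path_def is_walk_def)
  next
    case False
    then have "set (path_edges C) \<subseteq> M" "{last C, hd C} \<in> M"
      using C by (auto simp: is_cycle_def is_walk_def)
    then have "is_cycle V M C" using C by (auto simp: is_cycle_def is_walk_def)
    then show False using acyclic by (auto simp: acyclic_edges_def)
  qed
qed

lemma spanning_forest_exchange:
  assumes sf: "spanning_forest V X M" and P: "is_path V M u v P"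
    and uv: "{u, v} \<in> X" "{u, v} \<notin> M" and g: "g \<in> set (path_edges P)"
  shows "spanning_forest V X (insert {u, v} (M - {g}))"
  unfolding spanning_forest_def
proof (intro conjI ballI impI)
  show "insert {u, v} (M - {g}) \<subseteq> X" using sf uv(1) by (auto simp: spanning_forest_def)
  show "acyclic_edges V (insert {u, v} (M - {g}))"
    using acyclic_edges_exchange[OF _ P g] sf by (simp add: spanning_forest_def)
  fix a b assume "a \<in> V" "b \<in> V" "connected_in V X a b"
  then have "connected_in V M a b" using sf by (simp add: spanning_forest_def)
  then show "connected_in V (insert {u, v} (M - {g})) a b"
    by (rule connected_in_exchange[OF P g uv(2)])
qed

text \<open>If some edge of the zero-cost forest Z were missing, the forest path between its ends
  would contain an edge of positive cost, and exchanging the two would lower the cost.\<close>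
lemma min_spanning_forest_contains_zero_cost:
  assumes "finite X" "edges_ok V X" and msf: "min_spanning_forest V X c M"
    and Z: "Z \<subseteq> X" "acyclic_edges V Z" "\<forall>e\<in>Z. c e = 0" "\<forall>e\<in>X - Z. 0 < c e"
  shows "Z \<subseteq> M"
proof
  fix e assume eZ: "e \<in> Z"
  show "e \<in> M"
  proof (rule ccontr)
    assume eM: "e \<notin> M"
    have sf: "spanning_forest V X M" and minimal: "\<And>M'. spanning_forest V X M' \<Longrightarrow> sum c M \<le> sum c M'"
      using msf by (auto simp: min_spanning_forest_def)
    obtain u v where uv: "u \<noteq> v" "u \<in> V" "v \<in> V" "e = {u, v}"
      using assms(2) eZ Z(1) unfolding edges_ok_def by (meson subsetD)
    have "connected_in V X u v" using eZ Z(1) uv by (intro connected_in_edge) auto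
    then have "connected_in V M u v" using sf uv(2,3) by (simp add: spanning_forest_def)
    then obtain P where P: "is_path V M u v P" by (auto simp: connected_in_def)
    obtain g where g: "g \<in> set (path_edges P)" "g \<notin> Z"
    proof (rule ccontr)
      assume "\<not> thesis"
      then have "is_path V (Z - {e}) u v P" using that P eM by (auto simp: is_path_def is_walk_def)
      then show False using acyclic_no_bypass[OF Z(2)] eZ uv by (auto dest: connected_in_path)
    qed
    have "g \<in> M" using P g by (auto simp: is_path_def is_walk_def)
    moreover have "finite M" using sf assms(1) finite_subset by (auto simp: spanning_forest_def)
    ultimately have "sum c (insert e (M - {g})) = sum c M - c g"
      using eM Z(3) eZ by (simp add: sum_diff1)
    moreover have "0 < c g" using \<open>g \<in> M\<close> sf g Z(4) by (auto simp: spanning_forest_def)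
    moreover have "spanning_forest V X (insert e (M - {g}))"
      using spanning_forest_exchange[OF sf P _ _ g(1)] eZ Z(1) eM uv(4) by blast
    ultimately show False using minimal[of "insert e (M - {g})"] by linarith
  qed
qed

lemma card_gt_if_meets_disjoint_family:
  assumes "finite F" "\<And>i. i \<le> f \<Longrightarrow> F \<inter> A i \<noteq> {}"
    and "\<And>i j x. i \<le> f \<Longrightarrow> j \<le> f \<Longrightarrow> x \<in> A i \<Longrightarrow> x \<in> A j \<Longrightarrow> i = j"
  shows "f < card F"
proof -
  have "card {..f} \<le> card F"
    by (rule card_le_if_inj_on_rel[where r = "\<lambda>i x. x \<in> A i"]) (use assms in blast)+
  then show ?thesis by simp
qed

lemma connected_in_levels_minus:
  assumes levels: "\<forall>i\<le>f. spanning_forest V (E - (\<Union>j<i. Ms j)) (Ms i)"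
    and "finite F" "card F \<le> f" "connected_in V (E - F) u v"
  shows "connected_in V ((\<Union>i\<le>f. Ms i) - F) u v"
proof (rule connected_in_lift[OF _ assms(4)])
  fix x y assume xy: "{x, y} \<in> E - F" "x \<in> V" "y \<in> V"
  show "connected_in V ((\<Union>i\<le>f. Ms i) - F) x y"
  proof (cases "{x, y} \<in> (\<Union>i\<le>f. Ms i)")
    case True
    then show ?thesis using xy by (intro connected_in_edge) auto
  next
    case False
    have "\<exists>i\<le>f. connected_in V (Ms i - F) x y"
    proof (rule ccontr)
      assume none: "\<not> ?thesis"
      have hit: "F \<inter> Ms i \<noteq> {}" if i: "i \<le> f" for i
      proof -
        have "{x, y} \<in> E - (\<Union>j<i. Ms j)" using xy False i by auto
        then have "connected_in V (E - (\<Union>j<i. Ms j)) x y" using xy by (intro connected_in_edge) auto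
        then obtain P where P: "is_path V (Ms i) x y P"
          using levels i xy unfolding spanning_forest_def connected_in_def by blast
        show ?thesis
        proof (rule ccontr)
          assume "\<not> ?thesis"
          then have "is_path V (Ms i - F) x y P" using P by (auto simp: is_path_def is_walk_def)
          then show False using none i by (auto dest: connected_in_path)
        qed
      qed
      have level_sub: "Ms j \<subseteq> E - (\<Union>k<j. Ms k)" if "j \<le> f" for j
        using levels that by (simp add: spanning_forest_def)
      have "f < card F"
      proof (rule card_gt_if_meets_disjoint_family[OF assms(2) hit])
        show "i = j" if "i \<le> f" "j \<le> f" "g \<in> Ms i" "g \<in> Ms j" for i j g
          using that level_sub[of i] level_sub[of j] by (cases i j rule: linorder_cases) blast+
      qed
      then show False using assms(3) by simp
    qed
    then obtain i where "i \<le> f" "connected_in V (Ms i - F) x y" by blast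
    moreover have "Ms i - F \<subseteq> (\<Union>i\<le>f. Ms i) - F" using \<open>i \<le> f\<close> by blast
    ultimately show ?thesis using connected_in_mono[of V "Ms i - F" x y] by blast
  qed
qed

lemma path_in_tree_if_no_new_edges:
  assumes "acyclic_edges V M" "T - F \<subseteq> M" and q: "is_path V M a b q"
    and "\<forall>e\<in>set (path_edges q). \<not> new_edge V T F e"
  shows "is_path V T a b q"
proof -
  have "connected_in V (T - F) a b"
  proof (rule connected_in_lift)
    show "connected_in V (set (path_edges q)) a b"
      by (rule connected_in_path[of _ _ _ _ q]) (use q in \<open>auto simp: is_path_def is_walk_def\<close>)
    show "connected_in V (T - F) x y" if "{x, y} \<in> set (path_edges q)" for x y
      using assms(4) that by (auto simp: new_edge_def)
  qed
  then obtain r where r: "is_path V (T - F) a b r" by (auto simp: connected_in_def)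
  have "is_path V M a b r" using r assms(2) by (rule is_path_mono)
  then have "r = q" using acyclic_path_unique[OF assms(1) _ q] by blast
  then show ?thesis using r by (blast intro: is_path_mono)
qed

lemma new_edge_notin_diff:
  assumes "new_edge V T F {x, y}" "x \<in> V" "y \<in> V"
  shows "{x, y} \<notin> T - F"
proof
  assume "{x, y} \<in> T - F"
  then have "connected_in V (T - F) x y" using assms(2,3) by (rule connected_in_edge)
  then show False
    using assms(1) by (auto simp: new_edge_def doubleton_eq_iff dest: connected_in_sym)
qed

locale rooted_tree =
  fixes V :: "'v set" and T :: "'v set set" and w :: "'v set \<Rightarrow> real" and s :: 'v
  assumes finite_vertices: "finite V"
    and acyclic: "acyclic_edges V T"
    and connected: "\<And>u v. u \<in> V \<Longrightarrow> v \<in> V \<Longrightarrow> connected_in V T u v"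
    and weight_nonneg: "\<And>e. e \<in> T \<Longrightarrow> 0 \<le> w e"
    and root_in_vertices: "s \<in> V"
begin

definition depth :: "'v \<Rightarrow> real" where
  "depth x = real_of_ereal (dist V T w s x)"

lemma depth_path:
  assumes "x \<in> V"
  obtains P where "is_path V T s x P" "path_weight w P = depth x" "dist V T w s x = ereal (depth x)"
proof -
  obtain P where "is_path V T s x P" "dist V T w s x = ereal (path_weight w P)"
    using dist_attained[OF finite_vertices connected[OF root_in_vertices assms]] .
  then show ?thesis using that[of P] by (simp add: depth_def)
qed

lemma path_weight_nonneg: "is_path V T a b P \<Longrightarrow> 0 \<le> path_weight w P"
  unfolding path_weight_def
  by (intro sum_list_nonneg) (auto simp: is_path_def is_walk_def intro: weight_nonneg)

lemma depth_nonneg: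
  assumes "x \<in> V" shows "0 \<le> depth x"
proof -
  obtain P where "is_path V T s x P" "path_weight w P = depth x" using depth_path[OF assms] .
  then show ?thesis using path_weight_nonneg by metis
qed

lemma depth_root: "depth s = 0"
proof -
  obtain P where "is_path V T s s P" "path_weight w P = depth s"
    using depth_path[OF root_in_vertices] .
  then show ?thesis by (auto simp: path_weight_def dest: is_path_loop)
qed

text \<open>The tree path from a to b is contained in the walk from a up to the root and back
  down to b.\<close>
lemma path_weight_le_depth_sum:
  assumes q: "is_path V T a b q"
  shows "path_weight w q \<le> depth a + depth b"
proof -
  have "a \<in> V" "b \<in> V" using q by (auto simp: is_path_def is_walk_def)
  obtain Pa where Pa: "is_path V T s a Pa" "path_weight w Pa = depth a"
    using depth_path[OF \<open>a \<in> V\<close>] .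
  obtain Pb where Pb: "is_path V T s b Pb" "path_weight w Pb = depth b"
    using depth_path[OF \<open>b \<in> V\<close>] .
  let ?W = "rev Pa @ tl Pb"
  have ne: "rev Pa \<noteq> []" "Pb \<noteq> []" and joint: "last (rev Pa) = hd Pb"
    using Pa Pb by (auto simp: is_path_def is_walk_def last_rev)
  have "is_walk V T ?W"
    using Pa Pb joint by (intro is_walk_append_tl is_walk_rev) (auto simp: is_path_def)
  moreover have "hd ?W = a" "last ?W = b"
    using Pa Pb ne joint last_append_tl[OF ne(2) joint] by (auto simp: is_path_def hd_rev)
  moreover have "path_weight w ?W = depth a + depth b"
    using path_weight_append_tl[OF ne joint] Pa Pb by (simp add: path_weight_rev)
  moreover have "\<forall>e\<in>T. 0 \<le> w e" using weight_nonneg by blast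
  ultimately obtain r where "is_path V T a b r" "path_weight w r \<le> depth a + depth b"
    using walk_shortcut_to_path[of V T ?W w] by auto
  then show ?thesis using acyclic_path_unique[OF acyclic _ q] by blast
qed

lemma w_prime_non_tree_edge:
  "e \<notin> T \<Longrightarrow> w_prime V T w s e = w e + (\<Sum>u\<in>e. depth u)"
  by (simp add: w_prime_def depth_def)

lemma w_prime_pos: "e \<notin> T \<Longrightarrow> e \<subseteq> V \<Longrightarrow> 0 < w e \<Longrightarrow> 0 < w_prime V T w s e"
  using depth_nonneg by (auto simp: w_prime_non_tree_edge intro!: add_pos_nonneg sum_nonneg)

lemma min_spanning_forest_contains_tree_edges:
  assumes "edges_ok V X" "\<forall>e\<in>X. 0 < w e" "min_spanning_forest V X (w_prime V T w s) M"
  shows "X \<inter> T \<subseteq> M"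
proof (rule min_spanning_forest_contains_zero_cost[OF _ assms(1,3)])
  show "finite X" using finite_vertices assms(1) by (rule finite_edges)
  show "acyclic_edges V (X \<inter> T)" using acyclic by (rule acyclic_edges_mono) blast
  show "\<forall>e\<in>X - X \<inter> T. 0 < w_prime V T w s e"
    using assms(1,2) by (auto simp: edges_ok_def intro: w_prime_pos)
qed (auto simp: w_prime_def)

lemma forest_path_weight_le:
  assumes "acyclic_edges V M" "T - F \<subseteq> M" "M \<inter> F = {}" and "is_path V M a b q"
  shows "path_weight w q \<le>
    (\<Sum>e\<in>{e\<in>set (path_edges q). new_edge V T F e}. w_prime V T w s e) + depth a + depth b"
  using assms(4)
proof (induction "length q" arbitrary: q a b rule: less_induct)
  case less
  let ?N = "\<lambda>q. {e\<in>set (path_edges q). new_edge V T F e}"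
  show ?case
  proof (cases "\<exists>e\<in>set (path_edges q). new_edge V T F e")
    case True
    then obtain e where e: "e \<in> set (path_edges q)" "new_edge V T F e" by blast
    obtain q1 q2 where split: "q = q1 @ q2" "e = {last q1, hd q2}" "last q1 \<noteq> hd q2"
        "path_edges q = path_edges q1 @ e # path_edges q2"
      and q1: "is_path V (M - {e}) a (last q1) q1" and q2: "is_path V (M - {e}) (hd q2) b q2"
      using is_path_split_at_edge[OF less.prems e(1)] by blast
    have "q1 \<noteq> []" "q2 \<noteq> []" using q1 q2 by (auto simp: is_path_def is_walk_def)
    then have weight: "path_weight w q = path_weight w q1 + w e + path_weight w q2"
      using path_weight_append split(1,2) by simp
    have "is_path V M a (last q1) q1" "is_path V M (hd q2) b q2"
      using q1 q2 by (blast intro: is_path_mono)+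
    then have IH1: "path_weight w q1 \<le> sum (w_prime V T w s) (?N q1) + depth a + depth (last q1)"
      and IH2: "path_weight w q2 \<le> sum (w_prime V T w s) (?N q2) + depth (hd q2) + depth b"
      using less.hyps[of q1] less.hyps[of q2] split(1) \<open>q1 \<noteq> []\<close> \<open>q2 \<noteq> []\<close> by auto
    have "e \<in> M" using less.prems e(1) by (auto simp: is_path_def is_walk_def)
    moreover have "last q1 \<in> V" "hd q2 \<in> V" using q1 q2 by (auto simp: is_path_def is_walk_def)
    ultimately have "e \<notin> T"
      using new_edge_notin_diff[of V T F "last q1" "hd q2"] e(2) split(2) assms(3) by blast
    then have cost: "w_prime V T w s e = w e + depth (last q1) + depth (hd q2)"
      using split(2,3) by (simp add: w_prime_non_tree_edge)
    have "distinct (path_edges q)"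
      using less.prems by (auto simp: is_path_def intro: distinct_path_edges)
    then have "?N q = insert e (?N q1 \<union> ?N q2)" "e \<notin> ?N q1 \<union> ?N q2" "?N q1 \<inter> ?N q2 = {}"
      using split(4) e(2) by auto
    then have "sum (w_prime V T w s) (?N q)
        = w_prime V T w s e + sum (w_prime V T w s) (?N q1) + sum (w_prime V T w s) (?N q2)"
      by (simp add: sum.union_disjoint)
    then show ?thesis using weight IH1 IH2 cost by linarith
  next
    case False
    then have "is_path V T a b q"
      using path_in_tree_if_no_new_edges[OF assms(1,2) less.prems] by blast
    moreover have "?N q = {}" using False by auto
    ultimately show ?thesis using path_weight_le_depth_sum by (simp only: sum.empty add_0_left)
  qed
qed

end

theorem lemma2:
  fixes V :: "'v set" and E :: "'v set set" and w :: "'v set \<Rightarrow> real"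
    and s t :: 'v and f :: nat and T F M :: "'v set set" and Ms :: "nat \<Rightarrow> 'v set set"
  assumes "finite V" and "edges_ok V E" and "\<forall>e\<in>E. w e > 0"
    and "s \<in> V" and "\<forall>u\<in>V. \<forall>v\<in>V. connected_in V E u v"
    and "f \<ge> 1"
    and "sp_tree V E w s T"
    and "\<forall>i\<le>f. min_spanning_forest V (E - (\<Union>j<i. Ms j)) (w_prime V T w s) (Ms i)"
    and "F \<subseteq> E" and "card F \<le> f"
    and "t \<in> V" and "connected_in V (E - F) s t"
    and "min_spanning_forest V ((\<Union>i\<le>f. Ms i) - F) (w_prime V T w s) M"
  shows "(\<exists>p. is_path V M s t p) \<and>
    (\<forall>p. is_path V M s t p \<longrightarrow>
       dist V ((\<Union>i\<le>f. Ms i) - F) w s t \<le> ereal (path_weight w p) \<and>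
       ereal (path_weight w p) \<le>
         ereal (\<Sum>e\<in>{e\<in>set (path_edges p). new_edge V T F e}. w_prime V T w s e)
           + dist V E w s t)"
proof -
  let ?H = "\<Union>i\<le>f. Ms i"
  have T: "T \<subseteq> E" "\<forall>v\<in>V. dist V T w s v = dist V E w s v"
    using assms(7) by (auto simp: sp_tree_def)
  interpret rooted_tree V T w s
    using assms(1,3,4,7) T(1) by unfold_locales (auto simp: sp_tree_def less_imp_le)
  have levels: "\<forall>i\<le>f. spanning_forest V (E - (\<Union>j<i. Ms j)) (Ms i)"
    using assms(8) by (simp add: min_spanning_forest_def)
  then have "?H \<subseteq> E" by (auto simp: spanning_forest_def)
  have "min_spanning_forest V E (w_prime V T w s) (Ms 0)" using assms(8) by auto
  then have "E \<inter> T \<subseteq> Ms 0" using assms(2,3) min_spanning_forest_contains_tree_edges by blast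
  have "edges_ok V (?H - F)" "\<forall>e\<in>?H - F. 0 < w e"
    using \<open>?H \<subseteq> E\<close> assms(2,3) by (auto simp: edges_ok_def)
  then have "(?H - F) \<inter> T \<subseteq> M" by (rule min_spanning_forest_contains_tree_edges[OF _ _ assms(13)])
  then have "T - F \<subseteq> M" using \<open>E \<inter> T \<subseteq> Ms 0\<close> T(1) by blast
  have M: "M \<subseteq> ?H - F" "acyclic_edges V M"
    and spans: "\<forall>a\<in>V. \<forall>b\<in>V. connected_in V (?H - F) a b \<longrightarrow> connected_in V M a b"
    using assms(13) by (auto simp: min_spanning_forest_def spanning_forest_def)
  have "finite F" using assms(9) finite_edges[OF assms(1,2)] by (rule finite_subset)
  then have "connected_in V (?H - F) s t"
    by (rule connected_in_levels_minus[OF levels _ assms(10,12)])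
  then have "connected_in V M s t" using spans assms(4,11) by blast
  show ?thesis
  proof (intro conjI allI impI)
    show "\<exists>p. is_path V M s t p" using \<open>connected_in V M s t\<close> by (simp add: connected_in_def)
  next
    fix p assume "is_path V M s t p"
    then have "is_path V (?H - F) s t p" using M(1) by (rule is_path_mono)
    then show "dist V (?H - F) w s t \<le> ereal (path_weight w p)" by (rule dist_le_path_weight)
    have "M \<inter> F = {}" using M(1) by blast
    then have "path_weight w p \<le>
        (\<Sum>e\<in>{e\<in>set (path_edges p). new_edge V T F e}. w_prime V T w s e) + depth t"
      using forest_path_weight_le[OF M(2) \<open>T - F \<subseteq> M\<close> _ \<open>is_path V M s t p\<close>]
      by (simp add: depth_root)
    moreover obtain P where "dist V T w s t = ereal (depth t)" using depth_path[OF assms(11)] .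
    ultimately show "ereal (path_weight w p) \<le>
        ereal (\<Sum>e\<in>{e\<in>set (path_edges p). new_edge V T F e}. w_prime V T w s e) + dist V E w s t"
      using T(2) assms(11) by simp
  qed
qed

end
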